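(* The VCG-nearest payment rule is not non-decreasing: there exists a combinatorial auction instance (goods, bidders, bundles of interest), an allocation $x$, a bidder $i$, and bid profiles $b,b'$ with $x$ efficient for both, $b_{-i}=b'_{-i}$, $b_i'\ge b_i$ coordinatewise, such that $p_i(b',x)<p_i(b,x)$ under VCG-nearest.
   Context: A combinatorial auction sells goods $M$ to bidders $N=\{1,\dots,n\}$. Each bidder $i$ bids $b_i(K)\ge0$ on each of his bundles of interest (bids on other bundles are $0$). An allocation $x$ gives each bidder $i$ one bundle $x_i$ (a bundle of interest or $\emptyset$), pairwise disjoint; $x$ is efficient for $b$ if it maximizes $W(b,x)=\sum_{i} b_i(x_i)$. For $L\subseteq N$ let $W_L(b_L,x)=\sum_{j\in L}b_j(x_j)$ and $X_L(b_L)$ an allocation maximizing $W_L(b_L,\cdot)$ (allocating goods only among bidders in $L$); write $W_{-i}$, $X_{-i}$ for $L=N\setminus\{i\}$. The VCG payment is $q_i(b,x)=W_{-i}(b_{-i},X_{-i}(b_{-i}))-W_{-i}(b_{-i},x)$. The core is the set of payment vectors $p$ with $\sum_{i\in N\setminus L}p_i\ge W_L(b_L,X_L(b_L))-W_L(b_L,x)$ for all $L\subseteq N$; the minimum-revenue core is the set of core points minimizing $\sum_i p_i$. The VCG-nearest payment $p(b,x)$ is the unique point of the minimum-revenue core minimizing the Euclidean distance $\|p-q(b,x)\|_2$. A payment rule is non-decreasing if for every allocation $x$, every bidder $i$ and all bid profiles $b,b'$ for which $x$ is efficient, with $b_{-i}=b'_{-i}$ and $b_i'\ge b_i$ coordinatewise,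 one has $p_i(b',x)\ge p_i(b,x)$. *)

theory Defs
  imports Complex_Main
begin

text \<open>I i is the set of bundles of interest of bidder i.
  Bid profiles b :: nat => nat set => real give b i K, the bid of bidder i on bundle K.
  Allocations x :: nat => nat set give x i, the bundle of bidder i
  (by convention, the empty bundle for non-bidders).\<close>

type_synonym bids = "nat \<Rightarrow> nat set \<Rightarrow> real"
type_synonym allocation = "nat \<Rightarrow> nat set"
type_synonym payments = "nat \<Rightarrow> real"

definition bidders :: "nat \<Rightarrow> nat set" where
  "bidders n = {1..n}"

definition auction_instance :: "nat set \<Rightarrow> nat \<Rightarrow> (nat \<Rightarrow> nat set set) \<Rightarrow> bool" where
  "auction_instance M n I \<longleftrightarrow> finite M \<and> (\<forall>i \<in> bidders n. I i \<subseteq> Pow M)"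

definition valid_bids :: "nat \<Rightarrow> (nat \<Rightarrow> nat set set) \<Rightarrow> bids \<Rightarrow> bool" where
  "valid_bids n I b \<longleftrightarrow>
     (\<forall>i \<in> bidders n. \<forall>K. b i K \<ge> 0 \<and> (K \<notin> I i \<longrightarrow> b i K = 0))"

definition is_allocation :: "nat \<Rightarrow> (nat \<Rightarrow> nat set set) \<Rightarrow> allocation \<Rightarrow> bool" where
  "is_allocation n I x \<longleftrightarrow>
     (\<forall>i \<in> bidders n. x i \<in> I i \<or> x i = {}) \<and>
     (\<forall>i \<in> bidders n. \<forall>j \<in> bidders n. i \<noteq> j \<longrightarrow> x i \<inter> x j = {}) \<and>
     (\<forall>i. i \<notin> bidders n \<longrightarrow> x i = {})"

definition welfare :: "nat set \<Rightarrow> bids \<Rightarrow> allocation \<Rightarrow> real" where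
  "welfare L b x = (\<Sum>j\<in>L. b j (x j))"

definition efficient :: "nat \<Rightarrow> (nat \<Rightarrow> nat set set) \<Rightarrow> bids \<Rightarrow> allocation \<Rightarrow> bool" where
  "efficient n I b x \<longleftrightarrow> is_allocation n I x \<and>
     (\<forall>y. is_allocation n I y \<longrightarrow> welfare (bidders n) b y \<le> welfare (bidders n) b x)"

definition opt_welfare :: "nat \<Rightarrow> (nat \<Rightarrow> nat set set) \<Rightarrow> nat set \<Rightarrow> bids \<Rightarrow> real" where
  "opt_welfare n I L b = Max ((\<lambda>y. welfare L b y) `
      {y. is_allocation n I y \<and> (\<forall>j \<in> bidders n - L. y j = {})})"

definition vcg_payment :: "nat \<Rightarrow> (nat \<Rightarrow> nat set set) \<Rightarrow> bids \<Rightarrow> allocation \<Rightarrow> payments" where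
  "vcg_payment n I b x i =
     (if i \<in> bidders n then opt_welfare n I (bidders n - {i}) b - welfare (bidders n - {i}) b x
      else 0)"

definition in_core :: "nat \<Rightarrow> (nat \<Rightarrow> nat set set) \<Rightarrow> bids \<Rightarrow> allocation \<Rightarrow> payments \<Rightarrow> bool" where
  "in_core n I b x p \<longleftrightarrow> (\<forall>i. i \<notin> bidders n \<longrightarrow> p i = 0) \<and>
     (\<forall>L \<subseteq> bidders n. (\<Sum>i \<in> bidders n - L. p i) \<ge> opt_welfare n I L b - welfare L b x)"

definition in_min_revenue_core :: "nat \<Rightarrow> (nat \<Rightarrow> nat set set) \<Rightarrow> bids \<Rightarrow> allocation \<Rightarrow> payments \<Rightarrow> bool" where
  "in_min_revenue_core n I b x p \<longleftrightarrow> in_core n I b x p \<and>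
     (\<forall>p'. in_core n I b x p' \<longrightarrow> (\<Sum>i \<in> bidders n. p i) \<le> (\<Sum>i \<in> bidders n. p' i))"

definition pay_dist :: "nat \<Rightarrow> payments \<Rightarrow> payments \<Rightarrow> real" where
  "pay_dist n p q = sqrt (\<Sum>i \<in> bidders n. (p i - q i)^2)"

definition vcg_nearest :: "nat \<Rightarrow> (nat \<Rightarrow> nat set set) \<Rightarrow> bids \<Rightarrow> allocation \<Rightarrow> payments" where
  "vcg_nearest n I b x = (THE p. in_min_revenue_core n I b x p \<and>
     (\<forall>p'. in_min_revenue_core n I b x p' \<longrightarrow>
        pay_dist n p (vcg_payment n I b x) \<le> pay_dist n p' (vcg_payment n I b x)))"

end

theory Submission
  imports Defs
begin

(* Two goods 0 and 1 and three bidders: bidder 1 bids 2 on {0}, bidder 2 bids 2 on {1},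
   bidder 3 bids 2 on {0,1}. Giving 0 to bidder 1 and 1 to bidder 2 is efficient, all VCG
   payments vanish, and the minimum-revenue core is the segment p1 + p2 = 2, p3 = 0, so the
   VCG-nearest point is (1,1,0). If bidder 1 additionally bids 3 on {0,1}, the allocation stays
   efficient and the core only gains the constraint p2 >= 1, but bidder 2's VCG payment rises
   to 1. The projection of the new VCG point (0,1,0) onto the line p1 + p2 = 2, p3 = 0 is
   (1/2,3/2,0), which still satisfies p2 >= 1: bidder 1 pays less after raising a bid. *)

lemma all_subsets_three:
  "(\<forall>L \<subseteq> {a,b,c}. P L) \<longleftrightarrow>
     P {} \<and> P {a} \<and> P {b} \<and> P {c} \<and> P {a,b} \<and> P {a,c} \<and> P {b,c} \<and> P {a,b,c}"
proof -
  have "(\<forall>L \<subseteq> {a,b,c}. P L) \<longleftrightarrow> (\<forall>L \<in> Pow {a,b,c}. P L)"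
    by blast
  then show ?thesis
    by (simp add: Pow_insert insert_commute conj_ac)
qed

lemma bidders_3: "bidders 3 = {1,2,3}"
  by (auto simp: bidders_def)

text \<open>Restricting an allocation to a coalition \<open>L\<close> keeps it an allocation and does not
  change the welfare of \<open>L\<close>, so the coalition may as well maximise over all allocations.\<close>

lemma opt_welfare_eq_Max_allocations:
  "opt_welfare n I L b = Max (welfare L b ` {y. is_allocation n I y})"
proof -
  have "welfare L b ` {y. is_allocation n I y \<and> (\<forall>j \<in> bidders n - L. y j = {})}
      = welfare L b ` {y. is_allocation n I y}" (is "?A = ?B")
  proof
    show "?B \<subseteq> ?A"
    proof
      fix w assume "w \<in> ?B"
      then obtain y where y: "is_allocation n I y" and w: "w = welfare L b y"
        by blast
      define y' where "y' j = (if j \<in> L then y j else {})" for j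
      have "is_allocation n I y'"
        using y unfolding is_allocation_def y'_def by auto
      moreover have "welfare L b y' = w"
        unfolding w welfare_def y'_def by simp
      ultimately show "w \<in> ?A"
        unfolding y'_def by force
    qed
  qed blast
  then show ?thesis
    unfolding opt_welfare_def by simp
qed

lemma in_min_revenue_core_iff:
  assumes "in_core n I b x p0"
    and "\<And>p. in_core n I b x p \<Longrightarrow> (\<Sum>i \<in> bidders n. p0 i) \<le> (\<Sum>i \<in> bidders n. p i)"
  shows "in_min_revenue_core n I b x p \<longleftrightarrow>
    in_core n I b x p \<and> (\<Sum>i \<in> bidders n. p i) = (\<Sum>i \<in> bidders n. p0 i)"
  using assms unfolding in_min_revenue_core_def by (metis order_antisym order_trans)

lemma vcg_nearest_eqI:
  assumes "in_min_revenue_core n I b x p"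
    and "\<And>p'. in_min_revenue_core n I b x p' \<Longrightarrow> p' \<noteq> p \<Longrightarrow>
      pay_dist n p (vcg_payment n I b x) < pay_dist n p' (vcg_payment n I b x)"
  shows "vcg_nearest n I b x = p"
  unfolding vcg_nearest_def
proof (rule the_equality)
  show "in_min_revenue_core n I b x p \<and> (\<forall>p'. in_min_revenue_core n I b x p' \<longrightarrow>
      pay_dist n p (vcg_payment n I b x) \<le> pay_dist n p' (vcg_payment n I b x))"
    using assms by (metis order_le_less)
next
  fix p' assume "in_min_revenue_core n I b x p' \<and> (\<forall>p''. in_min_revenue_core n I b x p'' \<longrightarrow>
      pay_dist n p' (vcg_payment n I b x) \<le> pay_dist n p'' (vcg_payment n I b x))"
  then show "p' = p"
    using assms by (meson not_le)
qed

definition payments_12 :: "real \<Rightarrow> real \<Rightarrow> payments" where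
  "payments_12 u v = (\<lambda>i. if i = 1 then u else if i = 2 then v else 0)"

text \<open>The condition \<open>u - q 1 = v - q 2\<close> says that \<open>payments_12 u v - q\<close> is orthogonal to
  the line \<open>p 1 + p 2 = s\<close>, \<open>p 3 = 0\<close>, so the distance to \<open>q\<close> grows strictly
  along that line by Pythagoras.\<close>

lemma vcg_nearest_eq_projection:
  assumes on_line: "\<And>p. in_min_revenue_core 3 I b x p \<Longrightarrow> p 3 = 0 \<and> p 1 + p 2 = s"
    and in_mrc: "in_min_revenue_core 3 I b x (payments_12 u v)"
    and orth: "u - vcg_payment 3 I b x 1 = v - vcg_payment 3 I b x 2"
  shows "vcg_nearest 3 I b x = payments_12 u v"
proof (rule vcg_nearest_eqI[OF in_mrc])
  fix p assume p: "in_min_revenue_core 3 I b x p" and ne: "p \<noteq> payments_12 u v"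
  define q where "q = vcg_payment 3 I b x"
  define t where "t = u - q 1"
  define d where "d = p 1 - u"
  have outside: "\<forall>i. i \<notin> {1,2,3} \<longrightarrow> p i = 0"
    using p unfolding in_min_revenue_core_def in_core_def bidders_3 by simp
  have "u + v = s" "p 3 = 0" "p 1 + p 2 = s"
    using on_line[OF in_mrc] on_line[OF p] by (simp_all add: payments_12_def)
  then have p2: "p 2 = v - d" and p3: "p 3 = 0"
    unfolding d_def by simp_all
  have "d \<noteq> 0"
  proof
    assume "d = 0"
    then have "p = payments_12 u v"
      using outside p2 p3 unfolding d_def payments_12_def by (intro ext) auto
    with ne show False ..
  qed
  have diffs: "u - q 1 = t" "v - q 2 = t" "p 1 - q 1 = t + d" "p 2 - q 2 = t - d"
    using orth p2 unfolding t_def d_def q_def by simp_all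
  have pythagoras:
    "(u - q 1)\<^sup>2 + (v - q 2)\<^sup>2 + 2 * d\<^sup>2 = (p 1 - q 1)\<^sup>2 + (p 2 - q 2)\<^sup>2"
    unfolding diffs by (simp add: power2_eq_square algebra_simps)
  have "0 < d\<^sup>2"
    using \<open>d \<noteq> 0\<close> by simp
  with pythagoras have "(u - q 1)\<^sup>2 + (v - q 2)\<^sup>2 < (p 1 - q 1)\<^sup>2 + (p 2 - q 2)\<^sup>2"
    by linarith
  then show "pay_dist 3 (payments_12 u v) q < pay_dist 3 p q"
    unfolding pay_dist_def bidders_3 using p3 by (simp add: payments_12_def)
qed

definition example_interests :: "nat \<Rightarrow> nat set set" where
  "example_interests i =
     (if i = 1 then {{0}, {0,1}} else if i = 2 then {{1}} else if i = 3 then {{0,1}} else {})"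

definition example_bids :: bids where
  "example_bids i K =
     (if i = 1 \<and> K = {0} \<or> i = 2 \<and> K = {1} \<or> i = 3 \<and> K = {0,1} then 2 else 0)"

definition example_raised_bids :: bids where
  "example_raised_bids i K = (if i = 1 \<and> K = {0,1} then 3 else example_bids i K)"

definition bundles3 :: "nat set \<Rightarrow> nat set \<Rightarrow> nat set \<Rightarrow> allocation" where
  "bundles3 a c d = (\<lambda>j. if j = 1 then a else if j = 2 then c else if j = 3 then d else {})"

definition example_allocation :: allocation where
  "example_allocation = bundles3 {0} {1} {}"

lemma example_allocations:
  "{y. is_allocation 3 example_interests y} =
     {bundles3 {0} {1} {}, bundles3 {0} {} {}, bundles3 {} {1} {},
      bundles3 {0,1} {} {}, bundles3 {} {} {0,1}, bundles3 {} {} {}}"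
proof (intro set_eqI iffI; simp only: mem_Collect_eq)
  fix y assume y: "is_allocation 3 example_interests y"
  have "y = bundles3 (y 1) (y 2) (y 3)"
    using y by (intro ext) (auto simp: bundles3_def is_allocation_def bidders_3)
  moreover have "y 1 = {} \<or> y 1 = {0} \<or> y 1 = {0,1}" "y 2 = {} \<or> y 2 = {1}" "y 3 = {} \<or> y 3 = {0,1}"
    using y by (auto simp: is_allocation_def bidders_3 example_interests_def)
  moreover have "y 1 \<inter> y 2 = {}" "y 1 \<inter> y 3 = {}" "y 2 \<inter> y 3 = {}"
    using y by (auto simp: is_allocation_def bidders_3)
  ultimately show "y \<in> {bundles3 {0} {1} {}, bundles3 {0} {} {}, bundles3 {} {1} {},
      bundles3 {0,1} {} {}, bundles3 {} {} {0,1}, bundles3 {} {} {}}"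
    by (elim disjE) auto
next
  fix y assume "y \<in> {bundles3 {0} {1} {}, bundles3 {0} {} {}, bundles3 {} {1} {},
      bundles3 {0,1} {} {}, bundles3 {} {} {0,1}, bundles3 {} {} {}}"
  then show "is_allocation 3 example_interests y"
    by (elim insertE emptyE)
      (auto simp: is_allocation_def bidders_3 bundles3_def example_interests_def)
qed

lemmas example_simps = bidders_3 bundles3_def example_bids_def example_raised_bids_def
  example_allocation_def welfare_def opt_welfare_eq_Max_allocations example_allocations

lemma example_allocation_efficient:
  assumes "b = example_bids \<or> b = example_raised_bids"
  shows "efficient 3 example_interests b example_allocation"
  unfolding efficient_def
proof (intro conjI allI impI)
  show "is_allocation 3 example_interests example_allocation"
    using example_allocations unfolding example_allocation_def by blast
  fix y assume "is_allocation 3 example_interests y"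
  then have "y \<in> {bundles3 {0} {1} {}, bundles3 {0} {} {}, bundles3 {} {1} {},
      bundles3 {0,1} {} {}, bundles3 {} {} {0,1}, bundles3 {} {} {}}"
    using example_allocations by blast
  then show "welfare (bidders 3) b y \<le> welfare (bidders 3) b example_allocation"
    using assms by (elim insertE emptyE) (auto simp: example_simps)
qed

lemma in_core_example_bids_iff:
  "in_core 3 example_interests example_bids example_allocation p \<longleftrightarrow>
     (\<forall>i. i \<notin> {1,2,3} \<longrightarrow> p i = 0) \<and> 0 \<le> p 1 \<and> 0 \<le> p 2 \<and> 0 \<le> p 3 \<and> 2 \<le> p 1 + p 2"
  unfolding in_core_def bidders_3 all_subsets_three
  by (simp add: example_simps insert_Diff_if) (auto simp: add_nonneg_nonneg)

lemma in_core_example_raised_bids_iff: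
  "in_core 3 example_interests example_raised_bids example_allocation p \<longleftrightarrow>
     (\<forall>i. i \<notin> {1,2,3} \<longrightarrow> p i = 0) \<and> 0 \<le> p 1 \<and> 1 \<le> p 2 \<and> 0 \<le> p 3 \<and> 2 \<le> p 1 + p 2"
  unfolding in_core_def bidders_3 all_subsets_three
  by (simp add: example_simps insert_Diff_if) (auto simp: add_nonneg_nonneg)

lemma in_min_revenue_core_example_bids_iff:
  "in_min_revenue_core 3 example_interests example_bids example_allocation p \<longleftrightarrow>
     (\<forall>i. i \<notin> {1,2,3} \<longrightarrow> p i = 0) \<and> 0 \<le> p 1 \<and> 0 \<le> p 2 \<and> p 3 = 0 \<and> p 1 + p 2 = 2"
proof -
  have witness: "in_core 3 example_interests example_bids example_allocation (payments_12 1 1)"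
    by (simp add: in_core_example_bids_iff payments_12_def)
  have revenue: "(\<Sum>i \<in> bidders 3. (payments_12 1 1) i) \<le> (\<Sum>i \<in> bidders 3. p' i)"
    if "in_core 3 example_interests example_bids example_allocation p'" for p'
    using that by (simp add: in_core_example_bids_iff payments_12_def bidders_3)
  show ?thesis
    by (subst in_min_revenue_core_iff[OF witness revenue])
      (auto simp: in_core_example_bids_iff payments_12_def bidders_3)
qed

lemma in_min_revenue_core_example_raised_bids_iff:
  "in_min_revenue_core 3 example_interests example_raised_bids example_allocation p \<longleftrightarrow>
     (\<forall>i. i \<notin> {1,2,3} \<longrightarrow> p i = 0) \<and> 0 \<le> p 1 \<and> 1 \<le> p 2 \<and> p 3 = 0 \<and> p 1 + p 2 = 2"
proof -
  have witness: "in_core 3 example_interests example_raised_bids example_allocation (payments_12 (1/2) (3/2))"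
    by (simp add: in_core_example_raised_bids_iff payments_12_def)
  have revenue: "(\<Sum>i \<in> bidders 3. (payments_12 (1/2) (3/2)) i) \<le> (\<Sum>i \<in> bidders 3. p' i)"
    if "in_core 3 example_interests example_raised_bids example_allocation p'" for p'
    using that by (simp add: in_core_example_raised_bids_iff payments_12_def bidders_3)
  show ?thesis
    by (subst in_min_revenue_core_iff[OF witness revenue])
      (auto simp: in_core_example_raised_bids_iff payments_12_def bidders_3)
qed

lemma vcg_payment_example_bids:
  "vcg_payment 3 example_interests example_bids example_allocation = (\<lambda>_. 0)"
  by (rule ext) (simp add: vcg_payment_def example_simps insert_Diff_if)

lemma vcg_payment_example_raised_bids:
  "vcg_payment 3 example_interests example_raised_bids example_allocation = payments_12 0 1"
  by (rule ext) (simp add: vcg_payment_def payments_12_def example_simps insert_Diff_if)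

lemma vcg_nearest_example_bids:
  "vcg_nearest 3 example_interests example_bids example_allocation = payments_12 1 1"
  by (rule vcg_nearest_eq_projection[where s = 2])
    (simp_all add: in_min_revenue_core_example_bids_iff vcg_payment_example_bids payments_12_def)

lemma vcg_nearest_example_raised_bids:
  "vcg_nearest 3 example_interests example_raised_bids example_allocation = payments_12 (1/2) (3/2)"
  by (rule vcg_nearest_eq_projection[where s = 2])
    (simp_all add: in_min_revenue_core_example_raised_bids_iff vcg_payment_example_raised_bids
      payments_12_def)

theorem proposition1:
  shows "\<exists>(M::nat set) (n::nat) (I::nat \<Rightarrow> nat set set) (x::allocation) (i::nat) (b::bids) (b'::bids).
     auction_instance M n I \<and> i \<in> bidders n \<and>
     valid_bids n I b \<and> valid_bids n I b' \<and>
     efficient n I b x \<and> efficient n I b' x \<and>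
     (\<forall>j. j \<noteq> i \<longrightarrow> b' j = b j) \<and> (\<forall>K. b i K \<le> b' i K) \<and>
     vcg_nearest n I b' x i < vcg_nearest n I b x i"
proof (intro exI conjI)
  show "auction_instance {0,1} 3 example_interests"
    by (auto simp: auction_instance_def bidders_3 example_interests_def)
  show "1 \<in> bidders 3"
    by (simp add: bidders_3)
  show "valid_bids 3 example_interests example_bids"
    by (auto simp: valid_bids_def bidders_3 example_interests_def example_bids_def)
  show "valid_bids 3 example_interests example_raised_bids"
    by (auto simp: valid_bids_def bidders_3 example_interests_def example_raised_bids_def
        example_bids_def)
  show "efficient 3 example_interests example_bids example_allocation"
    "efficient 3 example_interests example_raised_bids example_allocation"
    by (simp_all add: example_allocation_efficient)
  show "\<forall>j. j \<noteq> 1 \<longrightarrow> example_raised_bids j = example_bids j"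
    by (auto simp: example_raised_bids_def)
  show "\<forall>K. example_bids 1 K \<le> example_raised_bids 1 K"
    by (simp add: example_raised_bids_def example_bids_def)
  show "vcg_nearest 3 example_interests example_raised_bids example_allocation 1
      < vcg_nearest 3 example_interests example_bids example_allocation 1"
    by (simp add: vcg_nearest_example_bids vcg_nearest_example_raised_bids payments_12_def)
qed

end
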